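(* Let $N\ge1$ and let $P_N$ be as in the context. For every $t\in(0,\pi)$ with $t\ne\frac{2\pi}{N+2}$, writing $c=\cos\frac{2\pi}{N+2}$, $$ 4|P_N(e^{it})|^2=\left(\frac{\cos\frac{(N+2)t}{2}}{\cos t-c}+\frac{2}{N+2}\cdot\frac{1-c}{1-\cos t}\cdot\frac{\sin t}{(\cos t-c)^2}\,\sin\frac{(N+2)t}{2}\right)^2+\left(\frac{\sin\frac{(N+2)t}{2}}{\cos t-c}\right)^2. $$
   Context: For an integer $N\ge1$ put, for $k=1,\dots,N$, $$b_k=\frac{(N-k+3)\sin\frac{(k+1)\pi}{N+2}-(N-k+1)\sin\frac{(k-1)\pi}{N+2}}{(N+2)\sin\frac{\pi}{N+2}},$$ and define $P_N(z)=\frac{1}{\sin\frac{2\pi}{N+2}}\sum_{k=1}^N b_k\sin\frac{k\pi}{N+2}\,z^k$ (so $P_N(0)=0$, $P_N'(0)=1$). *)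

theory Defs
  imports "HOL-Analysis.Analysis"
begin

definition b_coef :: "nat \<Rightarrow> nat \<Rightarrow> real" where
  "b_coef N k =
     ((real N - real k + 3) * sin ((real k + 1) * pi / (real N + 2))
      - (real N - real k + 1) * sin ((real k - 1) * pi / (real N + 2)))
     / ((real N + 2) * sin (pi / (real N + 2)))"

definition P_poly :: "nat \<Rightarrow> complex \<Rightarrow> complex" where
  "P_poly N z = (1 / complex_of_real (sin (2 * pi / (real N + 2)))) *
     (\<Sum>k=1..N. complex_of_real (b_coef N k * sin (real k * pi / (real N + 2))) * z ^ k)"

end

theory Submission
  imports Defs
begin

(* With w = pi/(N+2) and the primitive (N+2)-th root of unity p = exp(2iw), every coefficient
   b_k sin(kw) is a linear combination of p^k, k p^k, p^-k, k p^-k and 1. Hence P_N(z) is a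
   combination of the sums of x^k and of k x^k over k = 1..N for x = zp, z/p, z, and summing
   these geometric series with p^(N+2) = 1 gives the rational closed form
     2 P_N(z) = 2z/D + 4/(N+2) (1 - c) z^2 (z + 1) (z^(N+2) - 1) / ((z - 1) D^2),
   where D = z^2 - 2cz + 1. On the unit circle z = exp(it) one has D = 2z (cos t - c) and
   z^(N+2) = u^2 with u = exp(i(N+2)t/2); this turns the closed form into u (A - iB), where
   A and B are the two real expressions of the statement, and taking moduli gives A^2 + B^2. *)

lemma diff_one_mult_sum_power:
  fixes x :: "'a::comm_ring_1"
  shows "(x - 1) * (\<Sum>k=1..n. x^k) = x * (x^n - 1)"
  by (induction n) (simp_all add: algebra_simps)

lemma diff_one_sq_mult_sum_of_nat_mult_power:
  fixes x :: "'a::comm_ring_1"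
  shows "(x - 1)^2 * (\<Sum>k=1..n. of_nat k * x^k) = x * (1 - (of_nat n + 1) * x^n + of_nat n * x^Suc n)"
  by (induction n) (simp_all add: algebra_simps power2_eq_square)

lemma root_of_unity_geometric_sums:
  fixes p z :: "'a::field" and n :: nat
  assumes root: "p ^ (n + 2) = 1"
  shows "p^2 * (z*p - 1) * (\<Sum>k=1..n. (z*p)^k) = z*p * (z^n - p^2)"
    and "p^2 * (z*p - 1)^2 * (\<Sum>k=1..n. of_nat k * (z*p)^k)
      = z*p * (p^2 - (of_nat n + 1) * z^n + of_nat n * z^n * z * p)"
    and "(z - p) * (\<Sum>k=1..n. (z/p)^k) = z * (z^n * p^2 - 1)"
    and "(z - p)^2 * (\<Sum>k=1..n. of_nat k * (z/p)^k)
      = z*p * (1 - (of_nat n + 1) * z^n * p^2 + of_nat n * z^n * z * p)"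
proof -
  define Z X Y where "Z = z^n" "X = (z*p)^n" "Y = (z/p)^n"
  have "p \<noteq> 0" using root by auto
  have "p^n * p^2 = 1" using root by (simp only: power_add)
  then have XY: "p^2 * X = Z" "Y = Z * p^2"
    using \<open>p \<noteq> 0\<close> by (simp_all add: Z_X_Y_def power_mult_distrib power_divide field_simps)
  have "(z*p - 1) * (\<Sum>k=1..n. (z*p)^k) = z*p * (X - 1)"
    unfolding Z_X_Y_def by (rule diff_one_mult_sum_power)
  then have "p^2 * ((z*p - 1) * (\<Sum>k=1..n. (z*p)^k)) = p^2 * (z*p * (X - 1))" by (rule arg_cong)
  then show "p^2 * (z*p - 1) * (\<Sum>k=1..n. (z*p)^k) = z*p * (z^n - p^2)"
    unfolding Z_X_Y_def(1)[symmetric] XY(1)[symmetric] by (simp add: algebra_simps)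
  have "(z*p - 1)^2 * (\<Sum>k=1..n. of_nat k * (z*p)^k) = z*p * (1 - (of_nat n + 1) * X + of_nat n * (X * (z*p)))"
    unfolding Z_X_Y_def by (simp only: diff_one_sq_mult_sum_of_nat_mult_power power_Suc2)
  then have "p^2 * ((z*p - 1)^2 * (\<Sum>k=1..n. of_nat k * (z*p)^k))
      = p^2 * (z*p * (1 - (of_nat n + 1) * X + of_nat n * (X * (z*p))))"
    by (rule arg_cong)
  then show "p^2 * (z*p - 1)^2 * (\<Sum>k=1..n. of_nat k * (z*p)^k)
      = z*p * (p^2 - (of_nat n + 1) * z^n + of_nat n * z^n * z * p)"
    unfolding Z_X_Y_def(1)[symmetric] XY(1)[symmetric] by (simp add: algebra_simps)
  have "(z/p - 1) * (\<Sum>k=1..n. (z/p)^k) = z/p * (Y - 1)"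
    unfolding Z_X_Y_def by (rule diff_one_mult_sum_power)
  then show "(z - p) * (\<Sum>k=1..n. (z/p)^k) = z * (z^n * p^2 - 1)"
    using \<open>p \<noteq> 0\<close> unfolding Z_X_Y_def(1)[symmetric] XY(2) by (simp add: field_simps)
  have "(z/p - 1)^2 * (\<Sum>k=1..n. of_nat k * (z/p)^k) = z/p * (1 - (of_nat n + 1) * Y + of_nat n * (Y * (z/p)))"
    unfolding Z_X_Y_def by (simp only: diff_one_sq_mult_sum_of_nat_mult_power power_Suc2)
  then have "p * ((z - p)^2 * (\<Sum>k=1..n. of_nat k * (z/p)^k))
      = p * (z*p * (1 - (of_nat n + 1) * Z * p^2 + of_nat n * Z * z * p))"
    using \<open>p \<noteq> 0\<close> unfolding XY(2) by (simp add: field_simps power2_eq_square)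
  then show "(z - p)^2 * (\<Sum>k=1..n. of_nat k * (z/p)^k)
      = z*p * (1 - (of_nat n + 1) * z^n * p^2 + of_nat n * z^n * z * p)"
    using \<open>p \<noteq> 0\<close> by (simp add: Z_X_Y_def)
qed

lemma root_of_unity_sums_identity:
  fixes p z :: "'a::field" and n :: nat and m :: 'a
  assumes root: "p ^ (n + 2) = 1"
  defines "m \<equiv> of_nat n + 2"
  shows "(z - 1) * (z*p - 1)^2 * (z - p)^2 *
      ((m*(p - 1) + (p + 1)) * (\<Sum>k=1..n. (z*p)^k) - (p - 1) * (\<Sum>k=1..n. of_nat k * (z*p)^k)
       + ((p + 1) - m*(p - 1)) * (\<Sum>k=1..n. (z/p)^k) + (p - 1) * (\<Sum>k=1..n. of_nat k * (z/p)^k)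
       - 2*(p + 1) * (\<Sum>k=1..n. z^k))
    = (p - 1)^2 * (p + 1) * z * (m*(z - 1)*(z*p - 1)*(z - p) - (p - 1)^2 * z * (z + 1) * (z^(n+2) - 1))"
proof -
  define Z Sx Tx Sy Ty Sz where "Z = z^n" "Sx = (\<Sum>k=1..n. (z*p)^k)" "Tx = (\<Sum>k=1..n. of_nat k * (z*p)^k)"
    "Sy = (\<Sum>k=1..n. (z/p)^k)" "Ty = (\<Sum>k=1..n. of_nat k * (z/p)^k)" "Sz = (\<Sum>k=1..n. z^k)"
  have "p \<noteq> 0" using root by auto
  note sums = root_of_unity_geometric_sums[OF root, of z, folded Z_Sx_Tx_Sy_Ty_Sz_def]
  have Sz: "(z - 1) * Sz = z * (Z - 1)"
    unfolding Z_Sx_Tx_Sy_Ty_Sz_def by (rule diff_one_mult_sum_power)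
  let ?m1 = "m*(p - 1) + (p + 1)" and ?m2 = "(p + 1) - m*(p - 1)"
  have "p^2 * ((z - 1) * (z*p - 1)^2 * (z - p)^2 * (?m1 * Sx - (p - 1) * Tx + ?m2 * Sy + (p - 1) * Ty - 2*(p + 1) * Sz))
    = ?m1 * (z - 1) * (z*p - 1) * (z - p)^2 * (p^2 * (z*p - 1) * Sx)
      - (p - 1) * (z - 1) * (z - p)^2 * (p^2 * (z*p - 1)^2 * Tx)
      + ?m2 * p^2 * (z - 1) * (z*p - 1)^2 * (z - p) * ((z - p) * Sy)
      + (p - 1) * p^2 * (z - 1) * (z*p - 1)^2 * ((z - p)^2 * Ty)
      - 2*(p + 1) * p^2 * (z*p - 1)^2 * (z - p)^2 * ((z - 1) * Sz)"
    by algebra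
  also have "\<dots> = p^2 * ((p - 1)^2 * (p + 1) * z * (m*(z - 1)*(z*p - 1)*(z - p) - (p - 1)^2 * z * (z + 1) * (Z*z^2 - 1)))"
    unfolding sums Sz m_def by algebra
  also have "Z*z^2 = z^(n+2)" by (simp add: Z_Sx_Tx_Sy_Ty_Sz_def power_add power2_eq_square)
  finally show ?thesis using \<open>p \<noteq> 0\<close> by (simp add: Z_Sx_Tx_Sy_Ty_Sz_def)
qed

lemma cis_double_plus_one: "cis (2*w) + 1 = 2 * complex_of_real (cos w) * cis w"
  by (simp add: complex_eq_iff cos_double_cos sin_double power2_eq_square)

lemma cis_double_minus_one: "cis (2*w) - 1 = 2 * \<i> * complex_of_real (sin w) * cis w"
  by (simp add: complex_eq_iff cos_double_sin sin_double power2_eq_square)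

lemma of_real_sin_cis: "complex_of_real (sin x) = (cis x - inverse (cis x)) / (2*\<i>)"
  by (simp add: complex_eq_iff)

lemma of_real_cos_cis: "complex_of_real (cos x) = (cis x + inverse (cis x)) / 2"
  by (simp add: complex_eq_iff)

lemma sin_add_sin_diff_combination:
  fixes a x w :: real
  assumes "sin w \<noteq> 0"
  shows "((a + 1) * sin (x + w) - (a - 1) * sin (x - w)) / sin w * sin x
       = a * sin (2*x) + (1 - cos (2*x)) * (cos w / sin w)"
proof -
  have "(a + 1) * sin (x + w) - (a - 1) * sin (x - w) = 2 * (sin x * cos w + a * cos x * sin w)"
    by (simp add: sin_add sin_diff algebra_simps)
  then show ?thesis
    unfolding sin_double cos_double_sin using assms by (simp add: field_simps power2_eq_square)
qed

lemma sin_cot_combination_cis: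
  fixes a x w :: real and p e :: complex
  assumes "sin w \<noteq> 0"
  defines "p \<equiv> cis (2*w)" and "e \<equiv> cis (2*x)"
  shows "2*\<i>*(p - 1) * of_real (a * sin (2*x) + (1 - cos (2*x)) * (cos w / sin w))
       = (a*(p - 1) + (p + 1)) * e + ((p + 1) - a*(p - 1)) / e - 2*(p + 1)"
proof -
  have "e \<noteq> 0" by (simp add: e_def)
  have "p - 1 \<noteq> 0" using assms by (simp add: p_def cis_double_minus_one)
  have cot: "of_real (cos w / sin w) = \<i> * (p + 1) / (p - 1)"
    using assms by (simp add: p_def cis_double_minus_one cis_double_plus_one)
  have sin2: "of_real (sin (2*x)) = (e - inverse e) / (2*\<i>)"
    unfolding e_def by (rule of_real_sin_cis)
  have cos2: "of_real (cos (2*x)) = (e + inverse e) / 2"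
    unfolding e_def by (rule of_real_cos_cis)
  have expand: "of_real (a * sin (2*x) + (1 - cos (2*x)) * (cos w / sin w))
      = a * ((e - inverse e) / (2*\<i>)) + (1 - (e + inverse e) / 2) * (\<i> * (p + 1) / (p - 1))"
    by (simp only: of_real_add of_real_mult of_real_diff of_real_1 sin2 cos2 cot)
  show ?thesis
    unfolding expand using \<open>e \<noteq> 0\<close> \<open>p - 1 \<noteq> 0\<close> by (simp add: field_simps)
qed

lemma sin_pi_div_pos:
  fixes m :: real
  assumes "m > 1"
  shows "sin (pi / m) > 0"
  using assms by (intro sin_gt_zero) (simp_all add: field_simps)

lemma b_coef_mult_sin:
  fixes N k :: nat and M w :: real
  defines "M \<equiv> real N + 2"
  defines "w \<equiv> pi / M"
  shows "b_coef N k * sin (real k * pi / (real N + 2))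
       = ((M - k) * sin (2 * (k * w)) + (1 - cos (2 * (k * w))) * (cos w / sin w)) / M"
proof -
  have "sin w > 0" unfolding w_def M_def by (rule sin_pi_div_pos) simp
  have "b_coef N k * sin (real k * pi / (real N + 2))
      = ((M - k + 1) * sin (k * w + w) - (M - k - 1) * sin (k * w - w)) / sin w * sin (k * w) / M"
    unfolding b_coef_def w_def M_def by (simp add: algebra_simps add_divide_distrib diff_divide_distrib)
  also have "\<dots> = ((M - k) * sin (2 * (k * w)) + (1 - cos (2 * (k * w))) * (cos w / sin w)) / M"
    using sin_add_sin_diff_combination[of w "M - k" "k * w"] \<open>sin w > 0\<close> by simp
  finally show ?thesis .
qed

lemma b_coef_mult_sin_cis:
  fixes N k :: nat and M :: real and p :: complex
  defines "M \<equiv> real N + 2" and "p \<equiv> cis (2 * pi / (real N + 2))"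
  shows "2*\<i>*M*(p - 1) * of_real (b_coef N k * sin (real k * pi / (real N + 2)))
       = ((M - k)*(p - 1) + (p + 1)) * p^k + ((p + 1) - (M - k)*(p - 1)) / p^k - 2*(p + 1)"
proof -
  define w where "w = pi / M"
  have "sin w > 0" unfolding w_def M_def by (rule sin_pi_div_pos) simp
  have "M \<noteq> 0" by (simp add: M_def)
  have p: "p = cis (2*w)" by (simp add: p_def w_def M_def)
  have pk: "p^k = cis (2*(k*w))" unfolding p Complex.DeMoivre by (simp add: mult_ac)
  have "2*\<i>*M*(p - 1) * of_real (b_coef N k * sin (real k * pi / (real N + 2)))
      = 2*\<i>*(p - 1) * of_real ((M - k) * sin (2*(k*w)) + (1 - cos (2*(k*w))) * (cos w / sin w))"
    using b_coef_mult_sin[of N k] \<open>M \<noteq> 0\<close> unfolding M_def[symmetric] w_def[symmetric] by simp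
  also have "\<dots> = ((M - k)*(p - 1) + (p + 1)) * p^k + ((p + 1) - (M - k)*(p - 1)) / p^k - 2*(p + 1)"
    unfolding pk unfolding p by (rule sin_cot_combination_cis) (use \<open>sin w > 0\<close> in simp)
  finally show ?thesis .
qed

lemma P_poly_sum_decomposition:
  fixes N :: nat and M :: real and p z :: complex
  defines "M \<equiv> real N + 2" and "p \<equiv> cis (2 * pi / (real N + 2))"
  shows "2*\<i>*M*(p - 1) * (\<Sum>k=1..N. of_real (b_coef N k * sin (real k * pi / (real N + 2))) * z^k)
       = (M*(p - 1) + (p + 1)) * (\<Sum>k=1..N. (z*p)^k) - (p - 1) * (\<Sum>k=1..N. of_nat k * (z*p)^k)
         + ((p + 1) - M*(p - 1)) * (\<Sum>k=1..N. (z/p)^k) + (p - 1) * (\<Sum>k=1..N. of_nat k * (z/p)^k)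
         - 2*(p + 1) * (\<Sum>k=1..N. z^k)"
proof -
  have summand: "2*\<i>*M*(p - 1) * (of_real (b_coef N k * sin (real k * pi / (real N + 2))) * z^k)
      = (M*(p - 1) + (p + 1)) * (z*p)^k - (p - 1) * (of_nat k * (z*p)^k)
        + ((p + 1) - M*(p - 1)) * (z/p)^k + (p - 1) * (of_nat k * (z/p)^k) - 2*(p + 1) * z^k" for k
  proof -
    have "p \<noteq> 0" by (simp add: p_def)
    have "2*\<i>*M*(p - 1) * (of_real (b_coef N k * sin (real k * pi / (real N + 2))) * z^k)
        = (2*\<i>*M*(p - 1) * of_real (b_coef N k * sin (real k * pi / (real N + 2)))) * z^k"
      by (simp only: mult.assoc)
    also have "2*\<i>*M*(p - 1) * of_real (b_coef N k * sin (real k * pi / (real N + 2)))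
        = ((M - k)*(p - 1) + (p + 1)) * p^k + ((p + 1) - (M - k)*(p - 1)) / p^k - 2*(p + 1)"
      unfolding M_def p_def by (rule b_coef_mult_sin_cis)
    also have "(((M - k)*(p - 1) + (p + 1)) * p^k + ((p + 1) - (M - k)*(p - 1)) / p^k - 2*(p + 1)) * z^k
        = (M*(p - 1) + (p + 1)) * (z*p)^k - (p - 1) * (of_nat k * (z*p)^k)
          + ((p + 1) - M*(p - 1)) * (z/p)^k + (p - 1) * (of_nat k * (z/p)^k) - 2*(p + 1) * z^k"
      using \<open>p \<noteq> 0\<close> by (simp add: power_mult_distrib power_divide field_simps)
    finally show ?thesis .
  qed
  show ?thesis
    by (simp only: sum_distrib_left summand sum.distrib sum_subtractf)
qed

lemma P_poly_sum_times_denominator: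
  fixes N :: nat and M :: real and p z :: complex
  defines "M \<equiv> real N + 2" and "p \<equiv> cis (2 * pi / (real N + 2))"
  shows "(z - 1) * (z*p - 1)^2 * (z - p)^2
      * (2*\<i>*M*(p - 1) * (\<Sum>k=1..N. of_real (b_coef N k * sin (real k * pi / (real N + 2))) * z^k))
    = (p - 1)^2 * (p + 1) * z * (M*(z - 1)*(z*p - 1)*(z - p) - (p - 1)^2 * z * (z + 1) * (z^(N+2) - 1))"
proof -
  have "real (N + 2) * (2 * pi / (real N + 2)) = 2 * pi" by (simp add: field_simps)
  then have "p ^ (N + 2) = 1" unfolding p_def Complex.DeMoivre by simp
  from root_of_unity_sums_identity[OF this, of z] show ?thesis
    unfolding M_def p_def P_poly_sum_decomposition by simp
qed

lemma P_poly_closed_form: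
  fixes N :: nat and z c M :: complex
  defines "c \<equiv> of_real (cos (2 * pi / (real N + 2)))" and "M \<equiv> of_real (real N + 2)"
  assumes "N \<ge> 1" and "z \<noteq> 1" and D_nonzero: "z^2 - 2*c*z + 1 \<noteq> 0"
  shows "2 * P_poly N z
    = 2*z / (z^2 - 2*c*z + 1) + 4 / M * (1 - c) * z^2 * (z + 1) * (z^(N+2) - 1) / ((z - 1) * (z^2 - 2*c*z + 1)^2)"
proof -
  define p where "p = cis (2 * pi / (real N + 2))"
  define S where "S = (\<Sum>k=1..N. of_real (b_coef N k * sin (real k * pi / (real N + 2))) * z^k)"
  define Q where "Q = (p - 1) * (p + 1)"
  define E where "E = (z*p - 1) * (z - p)"
  define W where "W = z^(N+2)"
  define F where "F = M*(z - 1)*E - (p - 1)^2 * z * (z + 1) * (W - 1)"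
  have "p \<noteq> 0" by (simp add: p_def)
  have "M \<noteq> 0" unfolding M_def by (simp only: of_real_eq_0_iff)
  have "0 < 2 * pi / (real N + 2)" "2 * pi / (real N + 2) < pi"
    using \<open>N \<ge> 1\<close> by (simp_all add: field_simps)
  then have "sin (2 * pi / (real N + 2)) > 0" by (rule sin_gt_zero)
  have sin2: "of_real (sin (2 * pi / (real N + 2))) = Q / (2*\<i>*p)"
    using \<open>p \<noteq> 0\<close> unfolding of_real_sin_cis p_def[symmetric] Q_def by (simp add: field_simps)
  then have "Q \<noteq> 0" using \<open>sin (2 * pi / (real N + 2)) > 0\<close> by auto
  then have "p - 1 \<noteq> 0" by (simp add: Q_def)
  have c_p: "c = (p + inverse p) / 2" unfolding c_def p_def by (rule of_real_cos_cis)
  have D: "z^2 - 2*c*z + 1 = E / p" and one_minus_c: "1 - c = - ((p - 1)^2 / (2*p))"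
    unfolding c_p E_def using \<open>p \<noteq> 0\<close> by (simp_all add: field_simps power2_eq_square)
  have "E \<noteq> 0" using D_nonzero unfolding D by simp
  have "(z - 1) * (z*p - 1)^2 * (z - p)^2 * (2*\<i>*M*(p - 1) * S)
      = (p - 1)^2 * (p + 1) * z * (M*(z - 1)*(z*p - 1)*(z - p) - (p - 1)^2 * z * (z + 1) * (W - 1))"
    unfolding M_def S_def W_def p_def by (rule P_poly_sum_times_denominator)
  then have S_times: "S * (2*\<i>*M*(p - 1) * ((z - 1) * E^2)) = (p - 1)^2 * (p + 1) * z * F"
    unfolding E_def F_def by (simp add: power_mult_distrib mult_ac)
  have P_times: "Q * (2 * P_poly N z) = 4*\<i>*p * S"
    unfolding P_poly_def S_def[symmetric] sin2 using \<open>Q \<noteq> 0\<close> \<open>p \<noteq> 0\<close> by (simp add: field_simps)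
  have "(p - 1) * Q * (2 * P_poly N z * (M * (z - 1) * E^2))
      = (Q * (2 * P_poly N z)) * ((p - 1) * M * (z - 1) * E^2)"
    by (simp only: mult_ac)
  also have "\<dots> = 2*p * (S * (2*\<i>*M*(p - 1) * ((z - 1) * E^2)))"
    unfolding P_times by algebra
  also have "\<dots> = (p - 1) * Q * (2*p*z*F)"
    unfolding S_times Q_def by algebra
  finally have "2 * P_poly N z = 2*p*z*F / (M * (z - 1) * E^2)"
    using \<open>p - 1 \<noteq> 0\<close> \<open>Q \<noteq> 0\<close> \<open>M \<noteq> 0\<close> \<open>z \<noteq> 1\<close> \<open>E \<noteq> 0\<close>
    by (intro eq_divide_imp) simp_all
  also have "\<dots> = 2*z / (z^2 - 2*c*z + 1) + 4 / M * (1 - c) * z^2 * (z + 1) * (z^(N+2) - 1) / ((z - 1) * (z^2 - 2*c*z + 1)^2)"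
    unfolding D one_minus_c F_def W_def[symmetric]
    using \<open>M \<noteq> 0\<close> \<open>z \<noteq> 1\<close> \<open>p \<noteq> 0\<close> \<open>E \<noteq> 0\<close> by (simp add: field_simps; algebra)
  finally show ?thesis .
qed

lemma cis_quadratic: "cis t ^ 2 - 2 * complex_of_real c * cis t + 1 = 2 * cis t * complex_of_real (cos t - c)"
proof -
  have "cis t ^ 2 + 1 = 2 * complex_of_real (cos t) * cis t"
    using cis_double_plus_one[of t] by (simp add: Complex.DeMoivre)
  then show ?thesis by (simp add: algebra_simps)
qed

lemma unit_circle_rational_form:
  fixes t c A B :: real and n :: nat and z u :: complex
  assumes "n \<noteq> 0" and "cos t \<noteq> 1" and "cos t \<noteq> c"
  defines "z \<equiv> cis t" and "u \<equiv> cis (real n * t / 2)"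
  defines "A \<equiv> cos (real n * t / 2) / (cos t - c)
      + 2 / real n * ((1 - c) / (1 - cos t)) * (sin t / (cos t - c)^2) * sin (real n * t / 2)"
    and "B \<equiv> sin (real n * t / 2) / (cos t - c)"
  shows "2*z / (z^2 - 2*c*z + 1) + 4 / of_nat n * (1 - of_real c) * z^2 * (z + 1) * (z^n - 1) / ((z - 1) * (z^2 - 2*c*z + 1)^2)
    = u * (A - \<i> * B)"
proof -
  define D where "D = z^2 - 2*c*z + 1"
  have "z \<noteq> 0" "u \<noteq> 0" by (simp_all add: z_def u_def)
  have "z \<noteq> 1" using \<open>cos t \<noteq> 1\<close> by (auto simp: z_def complex_eq_iff)
  have cos_c: "of_real (cos t) - of_real c = D / (2*z)"
    using cis_quadratic[of t c] \<open>z \<noteq> 0\<close> unfolding D_def z_def[symmetric] by (simp add: field_simps)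
  then have "D \<noteq> 0" using \<open>cos t \<noteq> c\<close> by auto
  have one_cos: "1 - of_real (cos t) = - ((z - 1)^2 / (2*z))"
    using \<open>z \<noteq> 0\<close> unfolding of_real_cos_cis z_def[symmetric]
    by (simp add: field_simps power2_eq_square)
  have sin_t: "of_real (sin t) = (z^2 - 1) / (2*\<i>*z)"
    using \<open>z \<noteq> 0\<close> unfolding of_real_sin_cis z_def[symmetric] by (simp add: field_simps power2_eq_square)
  have cos_h: "of_real (cos (real n * t / 2)) = (u + inverse u) / 2"
    unfolding u_def by (rule of_real_cos_cis)
  have sin_h: "of_real (sin (real n * t / 2)) = (u - inverse u) / (2*\<i>)"
    unfolding u_def by (rule of_real_sin_cis)
  have "u^2 = cis (real 2 * (real n * t / 2))" unfolding u_def by (rule Complex.DeMoivre)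
  also have "\<dots> = z^n" by (simp add: z_def Complex.DeMoivre)
  finally have u2: "u^2 = z^n" .
  have "of_real A - \<i> * of_real B
      = ((u + inverse u) / 2) / (D / (2*z))
        + 2 / of_nat n * ((1 - of_real c) / (- ((z - 1)^2 / (2*z)))) * (((z^2 - 1) / (2*\<i>*z)) / (D / (2*z))^2)
          * ((u - inverse u) / (2*\<i>))
        - \<i> * (((u - inverse u) / (2*\<i>)) / (D / (2*z)))"
    unfolding A_def B_def
    by (simp only: of_real_add of_real_mult of_real_divide of_real_power of_real_diff of_real_1 of_real_numeral
        of_real_of_nat_eq cos_c one_cos sin_t cos_h sin_h)
  also have "u * \<dots> = 2*z / D + 4 / of_nat n * (1 - of_real c) * z^2 * (z + 1) * (u^2 - 1) / ((z - 1) * D^2)"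
  proof -
    have "u * (((u + inverse u) / 2) / (D / (2*z))
        + 2 / m * ((1 - a) / (- ((z - 1)^2 / (2*z)))) * (((z^2 - 1) / (2*\<i>*z)) / (D / (2*z))^2)
          * ((u - inverse u) / (2*\<i>))
        - \<i> * (((u - inverse u) / (2*\<i>)) / (D / (2*z))))
      = 2*z / D + 4 / m * (1 - a) * z^2 * (z + 1) * (u^2 - 1) / ((z - 1) * D^2)"
      if "m \<noteq> 0" for m a :: complex
      using that \<open>z \<noteq> 0\<close> \<open>u \<noteq> 0\<close> \<open>D \<noteq> 0\<close> \<open>z \<noteq> 1\<close>
      by (simp add: inverse_eq_divide field_simps; algebra)
    then show ?thesis using \<open>n \<noteq> 0\<close> by simp
  qed
  finally show ?thesis unfolding u2 D_def by simp
qed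

lemma cmod_cis_mult_sq: "(cmod (cis x * (of_real a - \<i> * of_real b)))^2 = a^2 + b^2"
  by (simp add: norm_mult cmod_power2)

theorem theorem2:
  fixes N :: nat and t :: real
  assumes "N \<ge> 1" and "0 < t" and "t < pi" and "t \<noteq> 2 * pi / (real N + 2)"
  shows "let c = cos (2 * pi / (real N + 2)) in
    4 * (cmod (P_poly N (cis t)))\<^sup>2 =
      (cos ((real N + 2) * t / 2) / (cos t - c)
        + 2 / (real N + 2) * ((1 - c) / (1 - cos t)) * (sin t / (cos t - c)\<^sup>2)
          * sin ((real N + 2) * t / 2))\<^sup>2
      + (sin ((real N + 2) * t / 2) / (cos t - c))\<^sup>2"
proof -
  define c where "c = cos (2 * pi / (real N + 2))"
  have "0 < 2 * pi / (real N + 2)" "2 * pi / (real N + 2) < pi"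
    using \<open>N \<ge> 1\<close> by (simp_all add: field_simps)
  then have "cos t \<noteq> c"
    using cos_inj_pi[of t "2 * pi / (real N + 2)"] assms(2-4) by (auto simp: c_def)
  have "cos t < cos 0" using assms(2,3) by (intro cos_monotone_0_pi) auto
  then have "cos t \<noteq> 1" by simp
  then have "cis t \<noteq> 1" by (auto simp: complex_eq_iff)
  have "cis t ^ 2 - 2 * of_real c * cis t + 1 \<noteq> 0"
    unfolding cis_quadratic using \<open>cos t \<noteq> c\<close> by simp
  have "(of_nat (N + 2) :: complex) = of_real (real N + 2)" "real (N + 2) = real N + 2" by simp_all
  note unit_circle = unit_circle_rational_form[of "N + 2" t c, unfolded this]
  define A B where "A = cos ((real N + 2) * t / 2) / (cos t - c)
      + 2 / (real N + 2) * ((1 - c) / (1 - cos t)) * (sin t / (cos t - c)\<^sup>2) * sin ((real N + 2) * t / 2)"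
    and "B = sin ((real N + 2) * t / 2) / (cos t - c)"
  have key: "2 * P_poly N (cis t) = cis ((real N + 2) * t / 2) * (of_real A - \<i> * of_real B)"
    using P_poly_closed_form[OF \<open>N \<ge> 1\<close> \<open>cis t \<noteq> 1\<close>, folded c_def]
      unit_circle \<open>cos t \<noteq> 1\<close> \<open>cos t \<noteq> c\<close> \<open>cis t ^ 2 - 2 * of_real c * cis t + 1 \<noteq> 0\<close>
    by (simp add: A_def B_def)
  have "4 * (cmod (P_poly N (cis t)))^2 = (cmod (2 * P_poly N (cis t)))^2"
    by (simp add: norm_mult power_mult_distrib)
  also have "\<dots> = A^2 + B^2"
    unfolding key by (rule cmod_cis_mult_sq)
  finally show ?thesis unfolding Let_def c_def[symmetric] A_def[symmetric] B_def[symmetric] .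
qed

end
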